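(* Let $C>0$, $\bar w\in[0,1]$, $\Psi_{\mathrm{prev}}\in[0,2]$, and let $\Psi$ be the limiter $$\Psi(r)=\max\big\{0,\ \min\{(2C+\Psi_{\mathrm{prev}})\,r,\ 1-\bar w+\bar w r,\ 2\}\big\}.$$ Suppose real numbers $Q_i^n,Q_i^{n-1},Q_{i-1}^n,Q_{i-1}^{n+1}$ satisfy the high-resolution compact inverse scheme $$Q_i^n + \tfrac12\Psi(r_i^n)\,(Q_{i-1}^{n+1}-Q_i^n) + C\,Q_i^n = Q_i^{n-1} + \tfrac12\Psi_{\mathrm{prev}}\,(Q_{i-1}^{n}-Q_i^{n-1}) + C\,Q_{i-1}^n,\qquad r_i^n=\frac{Q_{i-1}^n-Q_i^{n-1}}{Q_{i-1}^{n+1}-Q_i^n},$$ with the convention that the term $\Psi(r_i^n)(Q_{i-1}^{n+1}-Q_i^n)$ equals $0$ when $Q_{i-1}^{n+1}=Q_i^n$. Then $$\min\{Q_i^{n-1},Q_{i-1}^n\}\le Q_i^n\le \max\{Q_i^{n-1},Q_{i-1}^n\},$$ for every value of $C>0$ (no restriction on the Courant number).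
   Context: Scheme for $\kappa\partial_tq+v(t)\partial_xq=0$ on a space grid $x_i$ with steps $h_i$ and uniform time step $\tau$; $Q_i^n\approx q(x_i,t^n)$, $C=C_i^n=v^n\tau/(\kappa h_i)$ is the local Courant number, and $\Psi_{\mathrm{prev}}=\Psi(r_i^{n-1})$ is the (already computed) limiter value of the previous time level; values are computed by marching in space ($i=1,2,\dots$) and, for each $i$, in time ($n=1,2,\dots$). *)

theory Defs
  imports Complex_Main
begin

definition limiter :: "real \<Rightarrow> real \<Rightarrow> real \<Rightarrow> real \<Rightarrow> real" where
  "limiter C wbar psiprev r = max 0 (min ((2 * C + psiprev) * r) (min (1 - wbar + wbar * r) 2))"

definition limited_term :: "real \<Rightarrow> real \<Rightarrow> real \<Rightarrow> real \<Rightarrow> real \<Rightarrow> real \<Rightarrow> real \<Rightarrow> real" where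
  "limited_term C wbar psiprev Qin Qin1 Qi1n Qi1np1 =
     (if Qi1np1 = Qin then 0
      else limiter C wbar psiprev ((Qi1n - Qin1) / (Qi1np1 - Qin)) * (Qi1np1 - Qin))"

end

theory Submission
  imports Defs
begin

text \<open>The limiter is bounded by the TVD envelope \<open>max 0 ((2C + \<Psi>\<^sub>p\<^sub>r\<^sub>e\<^sub>v) r)\<close>; this is all
  the argument uses. Hence the limited flux term
  \<open>L = \<Psi>(e/d) d\<close> lies between \<open>0\<close> and \<open>(2C + \<Psi>\<^sub>p\<^sub>r\<^sub>e\<^sub>v) e\<close> with \<open>e = Q\<^sub>i\<^sub>-\<^sub>1\<^sup>n - Q\<^sub>i\<^sup>n\<^sup>-\<^sup>1\<close>.
  Solving the scheme for \<open>Q\<^sub>i\<^sup>n\<close> then gives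
  \<open>(1 + C)(Q\<^sub>i\<^sup>n - Q\<^sub>i\<^sup>n\<^sup>-\<^sup>1) = (C + \<Psi>\<^sub>p\<^sub>r\<^sub>e\<^sub>v/2) e - L/2\<close> and
  \<open>(1 + C)(Q\<^sub>i\<^sub>-\<^sub>1\<^sup>n - Q\<^sub>i\<^sup>n) = (1 - \<Psi>\<^sub>p\<^sub>r\<^sub>e\<^sub>v/2) e + L/2\<close>, both of the sign of \<open>e\<close> for every \<open>C > 0\<close>.\<close>

lemma limiter_nonneg: "0 \<le> limiter C wbar psiprev r"
  by (simp add: limiter_def)

lemma limiter_le_envelope: "limiter C wbar psiprev r \<le> max 0 ((2 * C + psiprev) * r)"
  by (simp add: limiter_def)

text \<open>No case distinction on \<open>d = 0\<close> is needed: then \<open>e / d = 0\<close> and the product vanishes.\<close>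
lemma envelope_limited_product_bounds:
  fixes f :: "real \<Rightarrow> real" and k e d :: real
  assumes nonneg: "\<And>r. 0 \<le> f r" and envelope: "\<And>r. f r \<le> max 0 (k * r)"
    and "0 \<le> k" and "0 \<le> e"
  shows "0 \<le> f (e / d) * d \<and> f (e / d) * d \<le> k * e"
proof (cases "d > 0")
  case True
  have "f (e / d) \<le> k * (e / d)"
    using envelope[of "e / d"] True \<open>0 \<le> k\<close> \<open>0 \<le> e\<close> by simp
  then have "f (e / d) * d \<le> k * e"
    using True by (simp add: pos_le_divide_eq)
  then show ?thesis using nonneg[of "e / d"] True by simp
next
  case False
  then have "e / d \<le> 0" using \<open>0 \<le> e\<close> by (simp add: divide_nonneg_nonpos)
  with \<open>0 \<le> k\<close> have "k * (e / d) \<le> 0"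
    by (rule mult_nonneg_nonpos)
  then have "f (e / d) = 0"
    using envelope[of "e / d"] nonneg[of "e / d"] by (metis max.absorb1 antisym)
  then show ?thesis using \<open>0 \<le> k\<close> \<open>0 \<le> e\<close> by simp
qed

lemma limited_term_eq_product:
  "limited_term C wbar psiprev Qin Qin1 Qi1n Qi1np1
     = limiter C wbar psiprev ((Qi1n - Qin1) / (Qi1np1 - Qin)) * (Qi1np1 - Qin)"
  by (simp add: limited_term_def)

lemma limited_term_bounds_nonneg:
  assumes "0 \<le> 2 * C + psiprev" and "Qin1 \<le> Qi1n"
  shows "0 \<le> limited_term C wbar psiprev Qin Qin1 Qi1n Qi1np1
    \<and> limited_term C wbar psiprev Qin Qin1 Qi1n Qi1np1 \<le> (2 * C + psiprev) * (Qi1n - Qin1)"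
  unfolding limited_term_eq_product
  using envelope_limited_product_bounds[of "limiter C wbar psiprev" "2 * C + psiprev"
      "Qi1n - Qin1" "Qi1np1 - Qin", OF limiter_nonneg limiter_le_envelope] assms
  by simp

text \<open>Negating \<open>e\<close> and \<open>d\<close> keeps the ratio and negates the product.\<close>
lemma limited_term_bounds_nonpos:
  assumes "0 \<le> 2 * C + psiprev" and "Qi1n \<le> Qin1"
  shows "(2 * C + psiprev) * (Qi1n - Qin1) \<le> limited_term C wbar psiprev Qin Qin1 Qi1n Qi1np1
    \<and> limited_term C wbar psiprev Qin Qin1 Qi1n Qi1np1 \<le> 0"
proof -
  have ratio: "(Qi1n - Qin1) / (Qi1np1 - Qin) = (Qin1 - Qi1n) / (Qin - Qi1np1)"
    by (metis minus_diff_eq minus_divide_divide)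
  have flip: "limited_term C wbar psiprev Qin Qin1 Qi1n Qi1np1
      = - limited_term C wbar psiprev Qi1np1 Qi1n Qin1 Qin"
    unfolding limited_term_eq_product ratio by (simp add: right_diff_distrib)
  show ?thesis
    using limited_term_bounds_nonneg[OF assms(1), of Qi1n Qin1 wbar Qi1np1 Qin] assms(2)
    unfolding flip by (simp add: right_diff_distrib)
qed

lemma scheme_value_between:
  fixes C psiprev L Qin Qin1 Qi1n :: real
  assumes "0 < C" and "psiprev \<le> 2" and "Qin1 \<le> Qi1n"
    and "0 \<le> L" and "L \<le> (2 * C + psiprev) * (Qi1n - Qin1)"
    and scheme: "Qin + (1/2) * L + C * Qin = Qin1 + (1/2) * psiprev * (Qi1n - Qin1) + C * Qi1n"
  shows "Qin1 \<le> Qin \<and> Qin \<le> Qi1n"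
proof -
  have "(1 + C) * (Qin - Qin1) = (C + psiprev / 2) * (Qi1n - Qin1) - L / 2"
    using scheme by (simp add: algebra_simps)
  also have "\<dots> = ((2 * C + psiprev) * (Qi1n - Qin1) - L) / 2"
    by (simp add: field_simps)
  also have "\<dots> \<ge> 0"
    using assms(5) by simp
  finally have lower: "0 \<le> (1 + C) * (Qin - Qin1)" .
  have "(1 + C) * (Qi1n - Qin) = (1 - psiprev / 2) * (Qi1n - Qin1) + L / 2"
    using scheme by (simp add: algebra_simps)
  also have "\<dots> \<ge> 0"
    using assms(2-4) by simp
  finally have upper: "0 \<le> (1 + C) * (Qi1n - Qin)" .
  show ?thesis
    using lower upper \<open>0 < C\<close> by (simp add: zero_le_mult_iff)
qed

theorem mainTheorem5:
  fixes C wbar psiprev Qin Qin1 Qi1n Qi1np1 :: real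
  assumes "C > 0"
    and "0 \<le> wbar" and "wbar \<le> 1"
    and "0 \<le> psiprev" and "psiprev \<le> 2"
    and "Qin + (1/2) * limited_term C wbar psiprev Qin Qin1 Qi1n Qi1np1 + C * Qin
         = Qin1 + (1/2) * psiprev * (Qi1n - Qin1) + C * Qi1n"
  shows "min Qin1 Qi1n \<le> Qin \<and> Qin \<le> max Qin1 Qi1n"
proof -
  let ?L = "limited_term C wbar psiprev Qin Qin1 Qi1n Qi1np1"
  have k: "0 \<le> 2 * C + psiprev" using assms(1,4) by simp
  show ?thesis
  proof (cases "Qin1 \<le> Qi1n")
    case True
    then show ?thesis
      using scheme_value_between[OF assms(1,5) True _ _ assms(6)]
        limited_term_bounds_nonneg[OF k True] by simp
  next
    case False
    then have "Qi1n \<le> Qin1" by simp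
    with limited_term_bounds_nonpos[OF k this]
    have "0 \<le> - ?L" and "- ?L \<le> (2 * C + psiprev) * (- Qi1n - - Qin1)"
      by (simp_all add: algebra_simps)
    moreover have "- Qin + (1/2) * (- ?L) + C * (- Qin)
        = - Qin1 + (1/2) * psiprev * (- Qi1n - - Qin1) + C * (- Qi1n)"
      using assms(6) by (simp add: field_simps)
    moreover have "- Qin1 \<le> - Qi1n" using \<open>Qi1n \<le> Qin1\<close> by simp
    ultimately have "- Qin1 \<le> - Qin \<and> - Qin \<le> - Qi1n"
      using scheme_value_between[OF assms(1,5)] by blast
    then show ?thesis using False by simp
  qed
qed

end
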